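(* Let $(N,\mathcal{M})$ be a matroid of rank $K\ge 1$ and $Z:2^N\to\mathbb{R}$ a monotone submodular function with $Z(\emptyset)=0$ and curvature $c$. Let $\Omega$ be an optimal basis, i.e. $\Omega\in\mathcal{M}$, $|\Omega|=K$ and $Z(\Omega)=\max\{Z(S):S\in\mathcal{M}\}$, and assume $Z(\Omega)>0$. Let $G=G^K$ be the output of any run of the GREEDY algorithm (with arbitrary tie-breaking), with discriminants $d_i$ and index $i_0$ as defined in the context, and let $d_{\min}=\min_{i<i_0} d_i$ (with $d_{\min}=\infty$ if there is no $i<i_0$). Then $$\frac{Z(G)}{Z(\Omega)}\;\ge\;\min\left(1,\ \frac{1}{c+\max_{i<i_0}\frac{1}{d_i}}\right)=\min\left(1,\ \frac{1}{c+\frac{1}{d_{\min}}}\right),$$ with the conventions $1/\infty=0$ and $1/0=\infty$ (so the right-hand side is $1$ when $c+1/d_{\min}=0$).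
   Context: A matroid $(N,\mathcal{M})$ on a finite ground set $N$ is a family $\mathcal{M}\subseteq 2^N$ of "independent sets" with $\emptyset\in\mathcal{M}$, closed under taking subsets, and satisfying augmentation: if $S,T\in\mathcal{M}$ and $|T|>|S|$ then there is $x\in T\setminus S$ with $S\cup\{x\}\in\mathcal{M}$. Its rank $K$ is the maximum cardinality of an independent set; a basis is an independent set of cardinality $K$. For $S\subseteq N$ and $q\in N$, $\rho_q(S)=Z(S\cup\{q\})-Z(S)$. $Z$ is monotone if $Z(S)\le Z(T)$ for $S\subseteq T$, and submodular if $\rho_x(T)\le\rho_x(S)$ whenever $S\subseteq T\subseteq N$, $x\notin T$. The curvature of $Z$ is $c=1-\min\{\rho_j(S)/\rho_j(\emptyset): S\subseteq N,\ j\in N\setminus S,\ \rho_j(\emptyset)>0\}$. For $S\subseteq N$, $S_\bot=\{j\in N\setminus S: S\cup\{j\}\in\mathcal{M}\}$. GREEDY algorithm: set $G^0=\emptyset$; for $i=1,\dots,K$, choose $g_i\in\arg\max\{\rho_q(G^{i-1}): q\in G^{i-1}_\bot\}$ (ties broken arbitrarily) and set $G^i=G^{i-1}\cup\{g_i\}$; output $G=G^K$. Write $\rho_i=\rho_{g_i}(G^{i-1})$. Discriminant at iteration $i$: $d_i=\rho_{g_i}(G^{i-1})/\max\{\rho_{g'}(G^{i-1}): g'\in G^{i-1}_\bot,\ g'\neq g_i\}$, with $d_i=\infty$ if that maximum is $0$. $i_0=\min\{i\in\{1,\dots,K\}: |G^{i-1}_\bot|=K-i+1\}$ (this set is nonempty,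 since $|G^{K-1}_\bot|\ge 1$ and any larger value would allow independent sets of size $K+1$... in any case set $i_0=K+1$ if it is empty). *)

theory Defs
  imports Complex_Main "HOL-Library.Extended_Real"
begin

definition matroid :: "'a set \<Rightarrow> 'a set set \<Rightarrow> bool" where
  "matroid N M \<longleftrightarrow> finite N \<and> M \<subseteq> Pow N \<and> {} \<in> M
     \<and> (\<forall>S T. T \<in> M \<and> S \<subseteq> T \<longrightarrow> S \<in> M)
     \<and> (\<forall>S T. S \<in> M \<and> T \<in> M \<and> card T > card S \<longrightarrow> (\<exists>x\<in>T - S. insert x S \<in> M))"

definition matroid_rank :: "'a set set \<Rightarrow> nat" where
  "matroid_rank M = Max (card ` M)"

definition rho :: "('a set \<Rightarrow> real) \<Rightarrow> 'a \<Rightarrow> 'a set \<Rightarrow> real" where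
  "rho Z q S = Z (S \<union> {q}) - Z S"

definition monotone_fn :: "'a set \<Rightarrow> ('a set \<Rightarrow> real) \<Rightarrow> bool" where
  "monotone_fn N Z \<longleftrightarrow> (\<forall>S T. S \<subseteq> T \<and> T \<subseteq> N \<longrightarrow> Z S \<le> Z T)"

definition submodular_fn :: "'a set \<Rightarrow> ('a set \<Rightarrow> real) \<Rightarrow> bool" where
  "submodular_fn N Z \<longleftrightarrow>
     (\<forall>S T x. S \<subseteq> T \<and> T \<subseteq> N \<and> x \<in> N \<and> x \<notin> T \<longrightarrow> rho Z x T \<le> rho Z x S)"

definition curvature :: "'a set \<Rightarrow> ('a set \<Rightarrow> real) \<Rightarrow> real" where
  "curvature N Z = 1 - Min {rho Z j S / rho Z j {} | S j. S \<subseteq> N \<and> j \<in> N - S \<and> rho Z j {} > 0}"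

definition perp :: "'a set \<Rightarrow> 'a set set \<Rightarrow> 'a set \<Rightarrow> 'a set" where
  "perp N M S = {j \<in> N - S. S \<union> {j} \<in> M}"

definition Gset :: "(nat \<Rightarrow> 'a) \<Rightarrow> nat \<Rightarrow> 'a set" where
  "Gset g i = g ` {1..i}"

definition greedy_run :: "'a set \<Rightarrow> 'a set set \<Rightarrow> ('a set \<Rightarrow> real) \<Rightarrow> nat \<Rightarrow> (nat \<Rightarrow> 'a) \<Rightarrow> bool" where
  "greedy_run N M Z K g \<longleftrightarrow>
     (\<forall>i\<in>{1..K}. g i \<in> perp N M (Gset g (i - 1))
        \<and> (\<forall>q\<in>perp N M (Gset g (i - 1)). rho Z q (Gset g (i - 1)) \<le> rho Z (g i) (Gset g (i - 1))))"

definition discriminant :: "'a set \<Rightarrow> 'a set set \<Rightarrow> ('a set \<Rightarrow> real) \<Rightarrow> (nat \<Rightarrow> 'a) \<Rightarrow> nat \<Rightarrow> ereal" where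
  "discriminant N M Z g i =
     (let S = Gset g (i - 1);
          m = Max {rho Z g' S | g'. g' \<in> perp N M S \<and> g' \<noteq> g i}
      in if m = 0 then \<infinity> else ereal (rho Z (g i) S / m))"

definition i_zero :: "'a set \<Rightarrow> 'a set set \<Rightarrow> nat \<Rightarrow> (nat \<Rightarrow> 'a) \<Rightarrow> nat" where
  "i_zero N M K g =
     (if \<exists>i\<in>{1..K}. card (perp N M (Gset g (i - 1))) = K - i + 1
      then LEAST i. i \<in> {1..K} \<and> card (perp N M (Gset g (i - 1))) = K - i + 1
      else K + 1)"

text \<open>max over i < i_0 of 1/d_i, with the empty maximum being 0 (i.e. d_min = \<infinity>).\<close>
definition max_inv_disc :: "'a set \<Rightarrow> 'a set set \<Rightarrow> ('a set \<Rightarrow> real) \<Rightarrow> nat \<Rightarrow> (nat \<Rightarrow> 'a) \<Rightarrow> ereal" where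
  "max_inv_disc N M Z K g =
     (if i_zero N M K g \<le> 1 then 0
      else Max ((\<lambda>i. inverse (discriminant N M Z g i)) ` {1..<i_zero N M K g}))"

end

theory Submission
  imports Defs
begin

(* Enumerate the basis \<Omega> as h_1, ..., h_K so that h_j = g_j whenever g_j \<in> \<Omega>, and
   otherwise h_j is a legal GREEDY choice at step j (matroid augmentation). By submodularity,
   Z(G \<union> \<Omega>) exceeds Z(G) by at most the sum of \<rho>_{h_j}(G^{j-1}) over the h_j \<notin> G; such
   a j comes before i_0 and h_j competes with g_j, so its term is at most \<rho>_j / d_j.
   By curvature, Z(G \<union> \<Omega>) exceeds Z(\<Omega>) by at least (1 - c) times the sum A of the \<rho>_j
   with g_j \<notin> \<Omega>. Hence Z(\<Omega>) \<le> Z(G) + (c + max 1/d_j - 1) A, and A \<le> Z(G) because the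
   \<rho>_j sum to Z(G). *)

lemma matroid_finite: "matroid N M \<Longrightarrow> finite N"
  by (simp add: matroid_def)

lemma matroid_indep_subset: "matroid N M \<Longrightarrow> S \<in> M \<Longrightarrow> S \<subseteq> N"
  by (auto simp: matroid_def)

lemma matroid_indep_downward: "matroid N M \<Longrightarrow> T \<in> M \<Longrightarrow> S \<subseteq> T \<Longrightarrow> S \<in> M"
  unfolding matroid_def by blast

lemma matroid_augment:
  "matroid N M \<Longrightarrow> S \<in> M \<Longrightarrow> T \<in> M \<Longrightarrow> card S < card T \<Longrightarrow> \<exists>x\<in>T - S. insert x S \<in> M"
  unfolding matroid_def by blast

lemma finite_perp: "matroid N M \<Longrightarrow> finite (perp N M S)"
  using matroid_finite[of N M] unfolding perp_def by simp

lemma perp_antimono: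
  assumes "matroid N M" "S \<subseteq> T"
  shows "perp N M T \<subseteq> perp N M S"
proof
  fix x assume "x \<in> perp N M T"
  moreover have "insert x S \<subseteq> insert x T"
    using assms(2) by blast
  ultimately show "x \<in> perp N M S"
    using matroid_indep_downward[OF assms(1)] assms(2) by (auto simp: perp_def)
qed

lemma Diff_subset_perp:
  assumes "matroid N M" "B \<in> M" "S \<subseteq> B"
  shows "B - S \<subseteq> perp N M S"
proof
  fix x assume "x \<in> B - S"
  moreover have "insert x S \<subseteq> B"
    using \<open>x \<in> B - S\<close> assms(3) by blast
  ultimately show "x \<in> perp N M S"
    using matroid_indep_downward[OF assms(1,2)] matroid_indep_subset[OF assms(1,2)]
    by (auto simp: perp_def)
qed

lemma Z_insert_eq: "Z (insert x S) = Z S + rho Z x S"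
  by (simp add: rho_def)

lemma rho_nonneg: "monotone_fn N Z \<Longrightarrow> S \<subseteq> N \<Longrightarrow> x \<in> N \<Longrightarrow> 0 \<le> rho Z x S"
  unfolding monotone_fn_def rho_def by (metis Un_upper1 le_sup_iff diff_ge_0_iff_ge insert_subset
      insert_is_Un sup_commute)

lemma rho_antimono:
  "submodular_fn N Z \<Longrightarrow> S \<subseteq> T \<Longrightarrow> T \<subseteq> N \<Longrightarrow> x \<in> N \<Longrightarrow> x \<notin> T \<Longrightarrow> rho Z x T \<le> rho Z x S"
  unfolding submodular_fn_def by blast

lemma submodular_union_le:
  assumes "submodular_fn N Z" "A \<subseteq> N" "B \<subseteq> N" "finite B"
  shows "Z (A \<union> B) \<le> Z A + (\<Sum>b\<in>B - A. rho Z b A)"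
  using assms(4,3)
proof (induction B rule: finite_induct)
  case empty
  then show ?case by simp
next
  case (insert b B)
  show ?case
  proof (cases "b \<in> A")
    case True
    then show ?thesis using insert by (simp add: insert_absorb)
  next
    case False
    have "Z (A \<union> insert b B) = Z (A \<union> B) + rho Z b (A \<union> B)"
      using Z_insert_eq by simp
    also have "rho Z b (A \<union> B) \<le> rho Z b A"
      using rho_antimono[OF assms(1)] assms(2) insert False by auto
    finally show ?thesis
      using insert False by (simp add: insert_Diff_if)
  qed
qed

lemma finite_curvature_ratios:
  "finite N \<Longrightarrow> finite {rho Z j S / rho Z j {} | S j. S \<subseteq> N \<and> j \<in> N - S \<and> 0 < rho Z j {}}"
  by (rule finite_subset[of _ "(\<lambda>(S, j). rho Z j S / rho Z j {}) ` (Pow N \<times> N)"]) auto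

lemma curvature_rho_ge:
  assumes "finite N" "monotone_fn N Z" "S \<subseteq> N" "j \<in> N - S"
  shows "(1 - curvature N Z) * rho Z j {} \<le> rho Z j S"
proof (cases "0 < rho Z j {}")
  case True
  define Q where "Q = {rho Z j S / rho Z j {} | S j. S \<subseteq> N \<and> j \<in> N - S \<and> 0 < rho Z j {}}"
  have "finite Q"
    unfolding Q_def using finite_curvature_ratios[OF assms(1)] .
  moreover have "rho Z j S / rho Z j {} \<in> Q"
    unfolding Q_def using assms(3,4) True by blast
  ultimately have "1 - curvature N Z \<le> rho Z j S / rho Z j {}"
    unfolding curvature_def Q_def[symmetric] by simp
  then show ?thesis
    using True by (simp add: pos_le_divide_eq)
next
  case False
  then show ?thesis
    using rho_nonneg[OF assms(2), of "{}" j] rho_nonneg[OF assms(2,3), of j] assms(4) by simp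
qed

lemma curvature_le_one:
  assumes "finite N" "monotone_fn N Z" "submodular_fn N Z" "Z {} = 0" "S \<subseteq> N" "0 < Z S"
  shows "curvature N Z \<le> 1"
proof -
  have "finite S"
    using assms(1,5) finite_subset by blast
  then have "Z S \<le> (\<Sum>b\<in>S. rho Z b {})"
    using submodular_union_le[OF assms(3), of "{}" S] assms(4,5) by simp
  moreover have "(\<Sum>b\<in>S. rho Z b {}) \<le> 0" if "\<forall>j\<in>S. rho Z j {} \<le> 0"
    using that by (intro sum_nonpos) auto
  ultimately obtain j where j: "j \<in> S" "0 < rho Z j {}"
    using assms(6) by force
  define Q where "Q = {rho Z j S / rho Z j {} | S j. S \<subseteq> N \<and> j \<in> N - S \<and> 0 < rho Z j {}}"
  have "finite Q"
    unfolding Q_def using finite_curvature_ratios[OF assms(1)] .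
  moreover have "Q \<noteq> {}"
    unfolding Q_def using j assms(5) by blast
  moreover have "\<forall>q\<in>Q. 0 \<le> q"
    unfolding Q_def using rho_nonneg[OF assms(2)] by fastforce
  ultimately show ?thesis
    unfolding curvature_def Q_def[symmetric] by simp
qed

lemma curvature_union_ge:
  assumes "finite N" "monotone_fn N Z" "T \<subseteq> N" "B \<subseteq> N"
  shows "Z T + (1 - curvature N Z) * (\<Sum>b\<in>B - T. rho Z b {}) \<le> Z (T \<union> B)"
proof -
  have "finite B"
    using assms(1,4) finite_subset by blast
  then show ?thesis
    using assms(4)
  proof (induction B rule: finite_induct)
    case empty
    then show ?case by simp
  next
    case (insert b B)
    show ?case
    proof (cases "b \<in> T")
      case True
      then show ?thesis using insert by (simp add: insert_absorb)
    next
      case False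
      have "(1 - curvature N Z) * rho Z b {} \<le> rho Z b (T \<union> B)"
        using curvature_rho_ge[OF assms(1,2)] assms(3) insert False by auto
      moreover have "Z (T \<union> insert b B) = Z (T \<union> B) + rho Z b (T \<union> B)"
        using Z_insert_eq by simp
      ultimately show ?thesis
        using insert False by (simp add: insert_Diff_if distrib_left)
    qed
  qed
qed

lemma Gset_0 [simp]: "Gset g 0 = {}"
  by (simp add: Gset_def)

lemma Gset_Suc: "Gset g (Suc i) = insert (g (Suc i)) (Gset g i)"
  by (simp add: Gset_def atLeastAtMostSuc_conv)

lemma Gset_mono: "i \<le> j \<Longrightarrow> Gset g i \<subseteq> Gset g j"
  by (auto simp: Gset_def)

lemma inverse_discriminant_le_max_inv_disc:
  "j \<in> {1..<i_zero N M K g} \<Longrightarrow> inverse (discriminant N M Z g j) \<le> max_inv_disc N M Z K g"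
  unfolding max_inv_disc_def by auto

lemma ereal_min_inverse_le_ratio:
  fixes a b e :: real
  assumes "0 < b" "b \<le> max 1 e * a"
  shows "min 1 (inverse (ereal e)) \<le> ereal (a / b)"
proof (cases "1 < e")
  case True
  then have "inverse e \<le> a / b"
    using assms by (simp add: field_simps)
  then show ?thesis
    using True by (simp add: min.coboundedI2)
next
  case False
  then have "1 \<le> a / b"
    using assms by simp
  then show ?thesis
    by (simp add: min.coboundedI1)
qed

lemma le_max_one_mult:
  fixes x y a c d :: real
  assumes "x + (1 - c) * a \<le> y + d * a" "0 \<le> a" "a \<le> y"
  shows "x \<le> max 1 (c + d) * y"
proof (cases "c + d \<le> 1")
  case True
  then have "(c + d - 1) * a \<le> 0"
    using assms(2) by (simp add: mult_nonpos_nonneg)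
  then show ?thesis
    using assms(1,2,3) True by (simp add: algebra_simps)
next
  case False
  then have "(c + d - 1) * a \<le> (c + d - 1) * y"
    using assms(3) by simp
  then show ?thesis
    using assms(1) False by (simp add: algebra_simps)
qed

locale independent_chain =
  fixes N :: "'a set" and M :: "'a set set" and K :: nat and g :: "nat \<Rightarrow> 'a"
  assumes matroid: "matroid N M"
    and chain_step: "i \<in> {1..K} \<Longrightarrow> g i \<in> perp N M (Gset g (i - 1))"
begin

lemma Gset_indep: "i \<le> K \<Longrightarrow> Gset g i \<in> M"
proof (induction i)
  case 0
  then show ?case using matroid by (simp add: matroid_def)
next
  case (Suc i)
  then show ?case using chain_step[of "Suc i"] by (simp add: perp_def Gset_Suc)
qed

lemma Gset_subset: "i \<le> K \<Longrightarrow> Gset g i \<subseteq> N"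
  using Gset_indep matroid_indep_subset[OF matroid] by blast

lemma g_in_N: "i \<in> {1..K} \<Longrightarrow> g i \<in> N"
  using chain_step by (simp add: perp_def)

lemma g_notin_Gset: "i \<in> {1..K} \<Longrightarrow> g i \<notin> Gset g (i - 1)"
  using chain_step by (simp add: perp_def)

lemma inj_on_g: "inj_on g {1..K}"
proof (rule linorder_inj_onI')
  fix i j assume "i \<in> {1..K}" "j \<in> {1..K}" "i < j"
  moreover from this have "g i \<in> Gset g (j - 1)"
    unfolding Gset_def by (intro imageI) auto
  ultimately show "g i \<noteq> g j"
    using g_notin_Gset[of j] by auto
qed

lemma card_Gset: "i \<le> K \<Longrightarrow> card (Gset g i) = i"
  unfolding Gset_def by (subst card_image) (auto intro: inj_on_subset[OF inj_on_g])

lemma exchange_enumeration: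
  assumes "T \<in> M" "card T = i" "i \<le> K"
  shows "\<exists>h. h ` {1..i} = T \<and> (\<forall>j\<in>{1..i}. (g j \<in> T \<longrightarrow> h j = g j)
           \<and> (g j \<notin> T \<longrightarrow> h j \<in> perp N M (Gset g (j - 1))))"
  using assms
proof (induction i arbitrary: T)
  case 0
  then have "T = {}"
    using matroid_indep_subset[OF matroid] matroid_finite[OF matroid] finite_subset by fastforce
  then show ?case by simp
next
  case (Suc i)
  have i: "Suc i \<in> {1..K}"
    using Suc.prems by simp
  obtain x where x: "x \<in> T" "x \<notin> Gset g i" "g (Suc i) \<in> T \<longrightarrow> x = g (Suc i)"
    "g (Suc i) \<notin> T \<longrightarrow> x \<in> perp N M (Gset g i)"
  proof (cases "g (Suc i) \<in> T")
    case True
    then show ?thesis using that g_notin_Gset[OF i] by simp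
  next
    case False
    obtain y where y: "y \<in> T - Gset g i" "insert y (Gset g i) \<in> M"
      using matroid_augment[OF matroid Gset_indep Suc.prems(1)] card_Gset Suc.prems by auto
    then have "y \<in> perp N M (Gset g i)"
      using matroid_indep_subset[OF matroid Suc.prems(1)] by (auto simp: perp_def)
    then show ?thesis using that y False by blast
  qed
  have T': "T - {x} \<in> M" "card (T - {x}) = i"
    using Suc.prems x(1) matroid_indep_downward[OF matroid] by auto
  obtain h where h: "h ` {1..i} = T - {x}" and h_g: "\<forall>j\<in>{1..i}. (g j \<in> T - {x} \<longrightarrow> h j = g j)
           \<and> (g j \<notin> T - {x} \<longrightarrow> h j \<in> perp N M (Gset g (j - 1)))"
    using Suc.IH[OF T' Suc_leD[OF Suc.prems(3)]] by blast
  have "g j \<noteq> x" if "j \<in> {1..i}" for j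
    using that x(2) by (auto simp: Gset_def)
  then have "\<forall>j\<in>{1..Suc i}. (g j \<in> T \<longrightarrow> (h(Suc i := x)) j = g j)
           \<and> (g j \<notin> T \<longrightarrow> (h(Suc i := x)) j \<in> perp N M (Gset g (j - 1)))"
    using h_g x by (auto simp: le_Suc_eq)
  moreover have "(h(Suc i := x)) ` {1..Suc i} = insert x (h ` {1..i})"
    by (auto simp: atLeastAtMostSuc_conv)
  then have "(h(Suc i := x)) ` {1..Suc i} = T"
    using h x(1) by auto
  ultimately show ?case by blast
qed

text \<open>At step i_0 the count K - i_0 + 1 forces perp(G^{i_0 - 1}) to be exactly the rest of the greedy
  basis, and perp only shrinks along the chain.\<close>

lemma perp_subset_Gset_from_i_zero:
  assumes "i_zero N M K g \<le> j" "j \<le> K"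
  shows "perp N M (Gset g (j - 1)) \<subseteq> Gset g K"
proof -
  let ?tight = "\<lambda>i. i \<in> {1..K} \<and> card (perp N M (Gset g (i - 1))) = K - i + 1"
  have ex: "\<exists>i. ?tight i"
    using assms unfolding i_zero_def by (auto split: if_splits)
  then have "i_zero N M K g = (LEAST i. ?tight i)"
    unfolding i_zero_def by (intro if_P) blast
  then have "?tight (i_zero N M K g)"
    using LeastI_ex[OF ex] by simp
  then obtain i0 where i0: "i0 = i_zero N M K g" "i0 \<in> {1..K}"
    and card_perp: "card (perp N M (Gset g (i0 - 1))) = K - i0 + 1"
    by blast
  define S where "S = Gset g (i0 - 1)"
  have "i0 - 1 \<le> K"
    using i0(2) by (simp add: le_diff_conv)
  then have S_G: "S \<subseteq> Gset g K"
    unfolding S_def by (rule Gset_mono)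
  have sub: "Gset g K - S \<subseteq> perp N M S"
    using Diff_subset_perp[OF matroid Gset_indep S_G] by simp
  have "finite S" "card S = i0 - 1"
    unfolding S_def using card_Gset[OF \<open>i0 - 1 \<le> K\<close>] by (simp_all add: Gset_def)
  then have "card (Gset g K - S) = K - (i0 - 1)"
    using card_Diff_subset[OF _ S_G] card_Gset[of K] by simp
  also have "\<dots> = K - i0 + 1"
    using i0(2) by (simp add: Suc_diff_le)
  finally have "card (Gset g K - S) = K - i0 + 1" .
  then have "Gset g K - S = perp N M S"
    using card_subset_eq[OF finite_perp[OF matroid] sub] card_perp unfolding S_def by simp
  moreover have "perp N M (Gset g (j - 1)) \<subseteq> perp N M S"
    unfolding S_def using i0(1) assms(1)
    by (intro perp_antimono[OF matroid] Gset_mono diff_le_mono) simp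
  ultimately show ?thesis by blast
qed

end

locale greedy =
  fixes N :: "'a set" and M :: "'a set set" and Z :: "'a set \<Rightarrow> real"
    and K :: nat and g :: "nat \<Rightarrow> 'a"
  assumes matroid: "matroid N M" and monotone: "monotone_fn N Z"
    and submodular: "submodular_fn N Z" and Z_empty: "Z {} = 0"
    and run: "greedy_run N M Z K g"

sublocale greedy \<subseteq> independent_chain N M K g
  using matroid run by unfold_locales (simp_all add: greedy_run_def)

context greedy
begin

lemma greedy_choice:
  "i \<in> {1..K} \<Longrightarrow> q \<in> perp N M (Gset g (i - 1)) \<Longrightarrow>
    rho Z q (Gset g (i - 1)) \<le> rho Z (g i) (Gset g (i - 1))"
  using run by (simp add: greedy_run_def)

definition gain :: "nat \<Rightarrow> real" where
  "gain j = rho Z (g j) (Gset g (j - 1))"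

lemma gain_nonneg: "j \<in> {1..K} \<Longrightarrow> 0 \<le> gain j"
  unfolding gain_def by (intro rho_nonneg[OF monotone] Gset_subset g_in_N) auto

lemma gain_le_rho_empty: "j \<in> {1..K} \<Longrightarrow> gain j \<le> rho Z (g j) {}"
  unfolding gain_def by (intro rho_antimono[OF submodular] Gset_subset g_in_N g_notin_Gset) auto

lemma Z_Gset_eq_sum_gain: "i \<le> K \<Longrightarrow> Z (Gset g i) = (\<Sum>j=1..i. gain j)"
  by (induction i) (simp_all add: Z_empty gain_def Gset_Suc Z_insert_eq)

lemma sum_gain_le: "I \<subseteq> {1..K} \<Longrightarrow> sum gain I \<le> Z (Gset g K)"
  using sum_mono2[of "{1..K}" I gain] gain_nonneg Z_Gset_eq_sum_gain[of K] by auto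

lemma competitor_rho_le:
  assumes j: "j \<in> {1..K}" and x: "x \<in> perp N M (Gset g (j - 1))" "x \<noteq> g j"
    and D: "inverse (discriminant N M Z g j) \<le> ereal D"
  shows "0 \<le> D" and "rho Z x (Gset g (j - 1)) \<le> D * gain j"
proof -
  define S where "S = Gset g (j - 1)"
  define Q where "Q = {rho Z q S | q. q \<in> perp N M S \<and> q \<noteq> g j}"
  define m where "m = Max Q"
  have Q: "finite Q" "rho Z x S \<in> Q"
    unfolding Q_def S_def using finite_perp[OF matroid] x by auto
  then have x_m: "rho Z x S \<le> m"
    unfolding m_def by simp
  have m_gain: "m \<le> gain j"
    unfolding m_def gain_def using Q greedy_choice[OF j] by (subst Max_le_iff) (auto simp: Q_def S_def)
  have x_nonneg: "0 \<le> rho Z x S"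
    unfolding S_def using j x(1) by (intro rho_nonneg[OF monotone] Gset_subset) (auto simp: perp_def)
  have disc: "discriminant N M Z g j = (if m = 0 then \<infinity> else ereal (gain j / m))"
    unfolding discriminant_def m_def Q_def S_def gain_def Let_def by simp
  have "0 \<le> D \<and> m \<le> D * gain j"
  proof (cases "m = 0")
    case True
    then show ?thesis using D disc gain_nonneg[OF j] by simp
  next
    case False
    then have "0 < m" "0 < gain j"
      using x_m x_nonneg m_gain by linarith+
    have "inverse (ereal (gain j / m)) \<le> ereal D"
      using D disc False by simp
    then have "m / gain j \<le> D"
      using \<open>0 < m\<close> \<open>0 < gain j\<close> by simp
    moreover have "0 < m / gain j"
      using \<open>0 < m\<close> \<open>0 < gain j\<close> by simp
    ultimately have "0 \<le> D"
      by linarith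
    moreover have "m \<le> D * gain j"
      using \<open>m / gain j \<le> D\<close> \<open>0 < gain j\<close> by (simp add: pos_divide_le_eq)
    ultimately show ?thesis ..
  qed
  then show "0 \<le> D" "rho Z x (Gset g (j - 1)) \<le> D * gain j"
    using x_m unfolding S_def by simp_all
qed

lemma union_le_greedy_plus_rho:
  assumes "h ` {1..K} \<subseteq> N"
  shows "Z (Gset g K \<union> h ` {1..K})
    \<le> Z (Gset g K) + (\<Sum>j | j \<in> {1..K} \<and> h j \<notin> Gset g K. rho Z (h j) (Gset g (j - 1)))"
proof -
  define G where "G = Gset g K"
  define J where "J = {j \<in> {1..K}. h j \<notin> G}"
  have G_N: "G \<subseteq> N"
    unfolding G_def using Gset_subset by simp
  have "finite J"
    unfolding J_def by (rule finite_subset[of _ "{1..K}"]) auto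
  have J_nonneg: "\<And>j. j \<in> J \<Longrightarrow> 0 \<le> rho Z (h j) G"
    using rho_nonneg[OF monotone G_N] assms unfolding J_def by (auto simp: image_subset_iff)
  have "Z (G \<union> h ` {1..K}) \<le> Z G + (\<Sum>b\<in>h ` {1..K} - G. rho Z b G)"
    using submodular_union_le[OF submodular G_N assms] by simp
  also have "h ` {1..K} - G = h ` J"
    unfolding J_def by auto
  also have "(\<Sum>b\<in>h ` J. rho Z b G) \<le> (\<Sum>j\<in>J. rho Z (h j) G)"
    using sum_image_le[OF \<open>finite J\<close>, of "\<lambda>b. rho Z b G" h] J_nonneg by (simp add: comp_def)
  also have "\<dots> \<le> (\<Sum>j\<in>J. rho Z (h j) (Gset g (j - 1)))"
    using assms unfolding J_def G_def
    by (intro sum_mono rho_antimono[OF submodular _ Gset_subset]) (auto simp: Gset_def image_subset_iff)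
  finally show ?thesis
    unfolding G_def J_def by simp
qed

lemma union_ge_plus_gains:
  assumes "T \<subseteq> N" "curvature N Z \<le> 1"
  shows "Z T + (1 - curvature N Z) * (\<Sum>j | j \<in> {1..K} \<and> g j \<notin> T. gain j) \<le> Z (Gset g K \<union> T)"
proof -
  define I where "I = {j \<in> {1..K}. g j \<notin> T}"
  have "I \<subseteq> {1..K}" "Gset g K - T = g ` I"
    unfolding I_def Gset_def by auto
  then have "(\<Sum>b\<in>Gset g K - T. rho Z b {}) = (\<Sum>j\<in>I. rho Z (g j) {})"
    using sum.reindex[OF inj_on_subset[OF inj_on_g]] by simp
  also have "\<dots> \<ge> sum gain I"
    unfolding I_def using gain_le_rho_empty by (intro sum_mono) auto
  finally have "(1 - curvature N Z) * sum gain I \<le> (1 - curvature N Z) * (\<Sum>b\<in>Gset g K - T. rho Z b {})"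
    using assms(2) by (intro mult_left_mono) auto
  moreover have "T \<union> Gset g K = Gset g K \<union> T"
    by blast
  ultimately show ?thesis
    using curvature_union_ge[OF matroid_finite[OF matroid] monotone assms(1) Gset_subset[of K]]
    unfolding I_def by simp
qed

lemma basis_le_greedy:
  assumes \<Omega>: "\<Omega> \<in> M" "card \<Omega> = K" and c: "curvature N Z \<le> 1"
    and D: "max_inv_disc N M Z K g = ereal D"
  shows "Z \<Omega> \<le> max 1 (curvature N Z + D) * Z (Gset g K)"
proof -
  define G where "G = Gset g K"
  obtain h where h_\<Omega>: "h ` {1..K} = \<Omega>" and h_g: "\<forall>j\<in>{1..K}. (g j \<in> \<Omega> \<longrightarrow> h j = g j)
      \<and> (g j \<notin> \<Omega> \<longrightarrow> h j \<in> perp N M (Gset g (j - 1)))"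
    using exchange_enumeration[OF \<Omega>] by blast
  define I where "I = {j \<in> {1..K}. g j \<notin> \<Omega>}"
  define J where "J = {j \<in> {1..K}. h j \<notin> G}"
  have g_G: "j \<in> {1..K} \<Longrightarrow> g j \<in> G" for j
    unfolding G_def Gset_def by auto
  have \<Omega>_N: "\<Omega> \<subseteq> N"
    using matroid_indep_subset[OF matroid \<Omega>(1)] .
  have upper: "Z (G \<union> \<Omega>) \<le> Z G + (\<Sum>j\<in>J. rho Z (h j) (Gset g (j - 1)))"
    using union_le_greedy_plus_rho[of h] \<Omega>_N h_\<Omega> unfolding G_def J_def by simp
  have G_nonneg: "0 \<le> Z G"
    using sum_gain_le[of "{}"] unfolding G_def by simp
  \<comment> \<open>Without a competitor nothing forces D \<ge> 0, so that case is settled by monotonicity.\<close>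
  show ?thesis
  proof (cases "J = {}")
    case True
    have "Z \<Omega> \<le> Z (G \<union> \<Omega>)"
      using monotone \<Omega>_N Gset_subset unfolding monotone_fn_def G_def by simp
    moreover have "Z G \<le> max 1 (curvature N Z + D) * Z G"
      using mult_right_mono[OF max.cobounded1[of 1] G_nonneg] by simp
    ultimately show ?thesis
      using upper True unfolding G_def by simp
  next
    case False
    have competitor: "h j \<in> perp N M (Gset g (j - 1)) \<and> h j \<noteq> g j" if "j \<in> J" for j
      using that h_g g_G unfolding J_def by auto
    have "j < i_zero N M K g" if "j \<in> J" for j
    proof (rule ccontr)
      assume "\<not> j < i_zero N M K g"
      then have "perp N M (Gset g (j - 1)) \<subseteq> G"
        using perp_subset_Gset_from_i_zero that unfolding J_def G_def by simp
      then show False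
        using competitor[OF that] that unfolding J_def by auto
    qed
    then have bound: "0 \<le> D \<and> rho Z (h j) (Gset g (j - 1)) \<le> D * gain j" if "j \<in> J" for j
      using that competitor competitor_rho_le[of j "h j" D] D
        inverse_discriminant_le_max_inv_disc[of j N M K g Z] unfolding J_def by auto
    have "J \<subseteq> I"
      unfolding J_def I_def using h_g g_G by auto
    then have "(\<Sum>j\<in>J. rho Z (h j) (Gset g (j - 1))) \<le> D * sum gain I"
      using bound gain_nonneg False unfolding sum_distrib_left
      by (intro order.trans[OF sum_mono sum_mono2]) (auto simp: I_def)
    moreover have "Z \<Omega> + (1 - curvature N Z) * sum gain I \<le> Z (G \<union> \<Omega>)"
      using union_ge_plus_gains[OF \<Omega>_N c] unfolding I_def G_def by simp
    ultimately have "Z \<Omega> + (1 - curvature N Z) * sum gain I \<le> Z G + D * sum gain I"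
      using upper by linarith
    moreover have "I \<subseteq> {1..K}"
      unfolding I_def by auto
    then have "0 \<le> sum gain I" "sum gain I \<le> Z G"
      using gain_nonneg sum_gain_le unfolding G_def by (auto intro!: sum_nonneg)
    ultimately show ?thesis
      unfolding G_def by (rule le_max_one_mult)
  qed
qed

end

theorem theorem3:
  fixes N :: "'a set" and M :: "'a set set" and Z :: "'a set \<Rightarrow> real"
    and K :: nat and \<Omega> :: "'a set" and g :: "nat \<Rightarrow> 'a"
  assumes "matroid N M"
    and "K = matroid_rank M" and "K \<ge> 1"
    and "monotone_fn N Z" and "submodular_fn N Z" and "Z {} = 0"
    and "\<Omega> \<in> M" and "card \<Omega> = K" and "\<forall>S\<in>M. Z S \<le> Z \<Omega>" and "Z \<Omega> > 0"
    and "greedy_run N M Z K g"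
  shows "ereal (Z (Gset g K) / Z \<Omega>) \<ge>
           min 1 (inverse (ereal (curvature N Z) + max_inv_disc N M Z K g))"
proof -
  interpret greedy N M Z K g
    using assms by unfold_locales
  have c: "curvature N Z \<le> 1"
    using curvature_le_one[OF matroid_finite[OF assms(1)] assms(4,5,6)
        matroid_indep_subset[OF assms(1,7)] assms(10)] .
  show ?thesis
  proof (cases "max_inv_disc N M Z K g")
    case (real D)
    then have "Z \<Omega> \<le> max 1 (curvature N Z + D) * Z (Gset g K)"
      using basis_le_greedy assms(7,8) c by blast
    then show ?thesis
      using real ereal_min_inverse_le_ratio assms(10) by simp
  next
    case PInf
    then show ?thesis
      using sum_gain_le[of "{}"] assms(10) by simp
  next
    case MInf
    then show ?thesis
      using sum_gain_le[of "{}"] assms(10) by simp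
  qed
qed

end
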